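(* Let $M$ be a finite-dimensional smooth manifold and $E$ a locally convex space. For each equivalence class $[f]\subseteq C^\infty_{fS}(M,E)$ define $\phi_{[f]}\colon [f]\to C^\infty_{vS,c}(M,E)$, $g\mapsto g-f$. Then $\{([f],\phi_{[f]})\}_{f\in C^\infty(M,E)}$ is a smooth atlas (each $\phi_{[f]}$ is a homeomorphism onto $C^\infty_{vS,c}(M,E)$, the domains cover $C^\infty_{fS}(M,E)$, and the transition maps are smooth), so $C^\infty_{fS}(M,E)$ is a smooth manifold modeled on the locally convex space $C^\infty_{vS,c}(M,E)$.
   Context: Conventions: finite-dimensional manifolds are smooth, Hausdorff and $\sigma$-compact. Locally convex spaces are real Hausdorff locally convex topological vector spaces; differentiability is in the sense of Bastiani (Keller $C^r$-theory): for $U\subseteq E$ open and $f\colon U\to F$, $d^{(k)}f(x;y_1,\dots,y_k)=D_{y_k}\cdots D_{y_1}f(x)$ is the iterated directional derivative, and $f$ is smooth if all these exist and are continuous on $U\times E^k$ (and $f$ is continuous); manifolds modeled on locally convex spaces and smooth maps between them are defined via charts with smooth transition maps. Let $M$ be a finite-dimensional manifold of dimension $m$ and $e_1,\dots,e_m$ the standard basis of $\mathbb{R}^m$. For a locally convex space $E$, a continuous seminorm $p$ on $E$, an open $W\subseteq\mathbb{R}^m$, a smooth $g\colon W\to E$, a compact $A\subseteq W$ and $r\in\mathbb{N}_0$ put $\|g\|(r,A,p)=\sup\{p(d^{(k)}g(a;\alpha)) : a\in A,\ \alpha\in\{e_1,\dots,e_m\}^k,\ 0\le k\le r\}$ (for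 $E=\mathbb{R}^n$ one takes $p=\|\cdot\|_\infty$ and writes $\|g\|(r,A)$). For a manifold $X$ modeled on $E$, $f\in C^\infty(M,X)$, a chart $(U,\phi)$ of $M$, a compact $A\subseteq U$, a chart $(V,\psi)$ of $X$ with $f(A)\subseteq V$, a continuous seminorm $p$ on $E$, $r\in\mathbb{N}_0$ and $\epsilon>0$, the elementary neighborhood is $\mathcal{N}^r(f;A,(U,\phi),(V,\psi),p,\epsilon)=\{h\in C^\infty(M,X): h(A)\subseteq V,\ \|\psi\circ h\circ\phi^{-1}-\psi\circ f\circ\phi^{-1}\|(r,\phi(A),p)<\epsilon\}$. A basic neighborhood of $f$ is an intersection $\bigcap_{i\in\Lambda}\mathcal{N}^{r_i}(f;A_i,(U_i,\phi_i),(V_i,\psi_i),p_i,\epsilon_i)$ of elementary neighborhoods of $f$ such that the family $\{A_i\}_{i\in\Lambda}$ is locally finite in $M$. The very strong topology on $C^\infty(M,X)$ is the topology with the basic neighborhoods (of all $f$) as a basis; $C^\infty_{vS}(M,X)$ denotes $C^\infty(M,X)$ with this topology. When source or target is a vector space, its identity chart is used and omitted from the notation. Fine very strong topology: $f,g\in C^\infty(M,X)$ are equivalent, $f\sim g$, if $\overline{\{x\in M: f(x)\neq g(x)\}}$ is compact; the fine very strong topology on $C^\infty(M,X)$ is the topology generated by the very strong topology together with all equivalence classes $[f]$ (so each class is open); $C^\infty_{fS}(M,X)$ denotes $C^\infty(M,X)$ with this topology. $C^\infty_{vS,c}(M,E)$ denotes the set of $f\in C^\infty(M,E)$ with $\overline{\{x: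 f(x)\ne 0\}}$ compact, with the subspace topology from $C^\infty_{vS}(M,E)$ and pointwise vector space operations; it is a locally convex space. Each class $[f]$ carries the subspace topology of $C^\infty_{fS}(M,E)$. *)

theory Defs
  imports "HOL-Analysis.Analysis" "HOL-Library.Function_Algebras"
begin

instantiation "fun" :: (type, real_vector) real_vector
begin
definition scaleR_fun :: "real \<Rightarrow> ('a \<Rightarrow> 'b) \<Rightarrow> 'a \<Rightarrow> 'b"
  where "scaleR_fun c f = (\<lambda>x. c *\<^sub>R f x)"
instance
  by standard (auto simp: scaleR_fun_def fun_eq_iff scaleR_add_right scaleR_add_left)
end

section \<open>Locally convex spaces (set based: the carrier is the topspace)\<close>

definition lcs :: "'v::real_vector topology \<Rightarrow> bool" where
  "lcs T \<longleftrightarrow>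
     subspace (topspace T) \<and> Hausdorff_space T \<and>
     continuous_map (prod_topology T T) T (\<lambda>(x, y). x + y) \<and>
     continuous_map (prod_topology euclideanreal T) T (\<lambda>(c, x). c *\<^sub>R x) \<and>
     (\<forall>W. openin T W \<and> 0 \<in> W \<longrightarrow> (\<exists>C. openin T C \<and> convex C \<and> 0 \<in> C \<and> C \<subseteq> W))"

definition cont_seminorm :: "'v::real_vector topology \<Rightarrow> ('v \<Rightarrow> real) \<Rightarrow> bool" where
  "cont_seminorm T p \<longleftrightarrow>
     (\<forall>x\<in>topspace T. \<forall>y\<in>topspace T. p (x + y) \<le> p x + p y) \<and>
     (\<forall>c. \<forall>x\<in>topspace T. p (c *\<^sub>R x) = \<bar>c\<bar> * p x) \<and>
     continuous_map T euclideanreal p"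

definition diffquot :: "('v::real_vector \<Rightarrow> 'w::real_vector) \<Rightarrow> 'v \<Rightarrow> 'v \<Rightarrow> real \<Rightarrow> 'w" where
  "diffquot f x y t = (1 / t) *\<^sub>R (f (x + t *\<^sub>R y) - f x)"

definition dirderiv :: "'w::real_vector topology \<Rightarrow> ('v::real_vector \<Rightarrow> 'w) \<Rightarrow> 'v \<Rightarrow> 'v \<Rightarrow> 'w" where
  "dirderiv TF f x y = (THE l. limitin TF (diffquot f x y) l (at (0::real)))"

text \<open>Iterated directional derivative: dd TF f k x ys = d^(k) f(x; ys 0, ..., ys (k-1)),
  i.e. D_{ys (k-1)} ... D_{ys 0} f (x).\<close>
fun dd :: "'w::real_vector topology \<Rightarrow> ('v::real_vector \<Rightarrow> 'w) \<Rightarrow> nat \<Rightarrow> 'v \<Rightarrow> (nat \<Rightarrow> 'v) \<Rightarrow> 'w" where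
  "dd TF f 0 x ys = f x"
| "dd TF f (Suc k) x ys = dirderiv TF (\<lambda>z. dd TF f k z ys) x (ys k)"

definition bastiani_smooth ::
  "'v::real_vector topology \<Rightarrow> 'w::real_vector topology \<Rightarrow> 'v set \<Rightarrow> ('v \<Rightarrow> 'w) \<Rightarrow> bool" where
  "bastiani_smooth TE TF U f \<longleftrightarrow>
     openin TE U \<and>
     continuous_map (subtopology TE U) TF f \<and>
     (\<forall>k. \<forall>x\<in>U. \<forall>ys\<in>PiE {..<k} (\<lambda>_. topspace TE). \<forall>y\<in>topspace TE.
        \<exists>l. limitin TF (diffquot (\<lambda>z. dd TF f k z ys) x y) l (at (0::real))) \<and>
     (\<forall>k. continuous_map (prod_topology (subtopology TE U) (product_topology (\<lambda>_. TE) {..<k})) TF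
            (\<lambda>(x, ys). dd TF f k x ys))"

text \<open>The model space R^m is a Euclidean space type 'r, with standard basis Basis.\<close>

definition is_chart :: "'m topology \<Rightarrow> 'm set \<Rightarrow> ('m \<Rightarrow> 'r::euclidean_space) \<Rightarrow> bool" where
  "is_chart TM U \<phi> \<longleftrightarrow> openin TM U \<and> open (\<phi> ` U) \<and>
     homeomorphic_map (subtopology TM U) (subtopology euclidean (\<phi> ` U)) \<phi>"

definition charts_compatible ::
  "'m set \<Rightarrow> ('m \<Rightarrow> 'r::euclidean_space) \<Rightarrow> 'm set \<Rightarrow> ('m \<Rightarrow> 'r) \<Rightarrow> bool" where
  "charts_compatible U \<phi> V \<psi> \<longleftrightarrow>
     bastiani_smooth euclidean euclidean (\<phi> ` (U \<inter> V)) (\<psi> \<circ> inv_into U \<phi>) \<and>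
     bastiani_smooth euclidean euclidean (\<psi> ` (U \<inter> V)) (\<phi> \<circ> inv_into V \<psi>)"

definition smooth_manifold :: "'m topology \<Rightarrow> ('m set \<times> ('m \<Rightarrow> 'r::euclidean_space)) set \<Rightarrow> bool" where
  "smooth_manifold TM \<A> \<longleftrightarrow>
     Hausdorff_space TM \<and>
     (\<exists>K :: nat \<Rightarrow> 'm set. (\<forall>n. compactin TM (K n)) \<and> (\<Union>n. K n) = topspace TM) \<and>
     (\<forall>(U, \<phi>)\<in>\<A>. is_chart TM U \<phi>) \<and>
     (\<Union>(U, \<phi>)\<in>\<A>. U) = topspace TM \<and>
     (\<forall>(U, \<phi>)\<in>\<A>. \<forall>(V, \<psi>)\<in>\<A>. charts_compatible U \<phi> V \<psi>)"

text \<open>The charts of M: all charts compatible with the atlas (the maximal atlas).\<close>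
definition mcharts :: "'m topology \<Rightarrow> ('m set \<times> ('m \<Rightarrow> 'r::euclidean_space)) set
                       \<Rightarrow> ('m set \<times> ('m \<Rightarrow> 'r)) set" where
  "mcharts TM \<A> = {(U, \<phi>). is_chart TM U \<phi> \<and> (\<forall>(V, \<psi>)\<in>\<A>. charts_compatible U \<phi> V \<psi>)}"

text \<open>Smooth maps M \<rightarrow> E (E with its identity chart).\<close>
definition Cinf :: "'m topology \<Rightarrow> ('m set \<times> ('m \<Rightarrow> 'r::euclidean_space)) set
                    \<Rightarrow> 'e::real_vector topology \<Rightarrow> ('m \<Rightarrow> 'e) set" where
  "Cinf TM \<A> TE = {f. (\<forall>(U, \<phi>)\<in>mcharts TM \<A>.
        bastiani_smooth euclidean TE (\<phi> ` U) (f \<circ> inv_into U \<phi>))}"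

text \<open>||g||(r, A, p) (with the value 0 for empty A).\<close>
definition crnorm :: "'e::real_vector topology \<Rightarrow> ('r::euclidean_space \<Rightarrow> 'e) \<Rightarrow> nat \<Rightarrow> 'r set
                      \<Rightarrow> ('e \<Rightarrow> real) \<Rightarrow> real" where
  "crnorm TE g r A p = Sup (insert 0
     {p (dd TE g k a \<alpha>) | a \<alpha> k. a \<in> A \<and> \<alpha> \<in> PiE {..<k} (\<lambda>_. Basis) \<and> k \<le> r})"

text \<open>Data of an elementary neighbourhood: (A, U, \<phi>, p, r, \<epsilon>).\<close>
type_synonym ('m, 'r, 'e) endata = "'m set \<times> 'm set \<times> ('m \<Rightarrow> 'r) \<times> ('e \<Rightarrow> real) \<times> nat \<times> real"

definition valid_endata :: "'m topology \<Rightarrow> ('m set \<times> ('m \<Rightarrow> 'r::euclidean_space)) set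
     \<Rightarrow> 'e::real_vector topology \<Rightarrow> ('m, 'r, 'e) endata \<Rightarrow> bool" where
  "valid_endata TM \<A> TE d \<longleftrightarrow> (case d of (A, U, \<phi>, p, r, \<epsilon>) \<Rightarrow>
     (U, \<phi>) \<in> mcharts TM \<A> \<and> compactin TM A \<and> A \<subseteq> U \<and> cont_seminorm TE p \<and> \<epsilon> > 0)"

definition elem_nbhd :: "'m topology \<Rightarrow> ('m set \<times> ('m \<Rightarrow> 'r::euclidean_space)) set
     \<Rightarrow> 'e::real_vector topology \<Rightarrow> ('m \<Rightarrow> 'e) \<Rightarrow> ('m, 'r, 'e) endata \<Rightarrow> ('m \<Rightarrow> 'e) set" where
  "elem_nbhd TM \<A> TE f d = (case d of (A, U, \<phi>, p, r, \<epsilon>) \<Rightarrow>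
     {h \<in> Cinf TM \<A> TE.
        crnorm TE (\<lambda>x. h (inv_into U \<phi> x) - f (inv_into U \<phi> x)) r (\<phi> ` A) p < \<epsilon>})"

definition basic_nbhds :: "'m topology \<Rightarrow> ('m set \<times> ('m \<Rightarrow> 'r::euclidean_space)) set
     \<Rightarrow> 'e::real_vector topology \<Rightarrow> ('m \<Rightarrow> 'e) set set" where
  "basic_nbhds TM \<A> TE =
     {B. \<exists>f \<in> Cinf TM \<A> TE. \<exists>\<D> :: ('m, 'r, 'e) endata set.
          (\<forall>d\<in>\<D>. valid_endata TM \<A> TE d) \<and>
          (\<forall>x\<in>topspace TM. \<exists>W. openin TM W \<and> x \<in> W \<and> finite {d\<in>\<D>. fst d \<inter> W \<noteq> {}}) \<and>
          B = Cinf TM \<A> TE \<inter> (\<Inter>d\<in>\<D>. elem_nbhd TM \<A> TE f d)}"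

definition vS_top :: "'m topology \<Rightarrow> ('m set \<times> ('m \<Rightarrow> 'r::euclidean_space)) set
     \<Rightarrow> 'e::real_vector topology \<Rightarrow> ('m \<Rightarrow> 'e) topology" where
  "vS_top TM \<A> TE = topology_generated_by (basic_nbhds TM \<A> TE)"

definition fclass :: "'m topology \<Rightarrow> ('m set \<times> ('m \<Rightarrow> 'r::euclidean_space)) set
     \<Rightarrow> 'e::real_vector topology \<Rightarrow> ('m \<Rightarrow> 'e) \<Rightarrow> ('m \<Rightarrow> 'e) set" where
  "fclass TM \<A> TE f = {g \<in> Cinf TM \<A> TE.
      compactin TM (TM closure_of {x \<in> topspace TM. f x \<noteq> g x})}"

definition fS_top :: "'m topology \<Rightarrow> ('m set \<times> ('m \<Rightarrow> 'r::euclidean_space)) set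
     \<Rightarrow> 'e::real_vector topology \<Rightarrow> ('m \<Rightarrow> 'e) topology" where
  "fS_top TM \<A> TE = topology_generated_by
     (basic_nbhds TM \<A> TE \<union> {fclass TM \<A> TE f | f. f \<in> Cinf TM \<A> TE})"

definition Cc :: "'m topology \<Rightarrow> ('m set \<times> ('m \<Rightarrow> 'r::euclidean_space)) set
     \<Rightarrow> 'e::real_vector topology \<Rightarrow> ('m \<Rightarrow> 'e) set" where
  "Cc TM \<A> TE = {f \<in> Cinf TM \<A> TE. compactin TM (TM closure_of {x \<in> topspace TM. f x \<noteq> 0})}"

definition vSc_top :: "'m topology \<Rightarrow> ('m set \<times> ('m \<Rightarrow> 'r::euclidean_space)) set
     \<Rightarrow> 'e::real_vector topology \<Rightarrow> ('m \<Rightarrow> 'e) topology" where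
  "vSc_top TM \<A> TE = subtopology (vS_top TM \<A> TE) (Cc TM \<A> TE)"

end

theory Submission
  imports Defs
begin

text \<open>Each class \<open>[f]\<close> is the translate \<open>f + C\<^sup>\<infinity>\<^sub>c(M,E)\<close>. Translation by a smooth map
  is a homeomorphism of the very strong topology, since it carries basic neighbourhoods of \<open>f\<^sub>0\<close>
  to basic neighbourhoods of \<open>f\<^sub>0 - c\<close>; and the classes, the only additional subbasic sets of
  the fine topology, meet \<open>[f]\<close> in \<open>\<emptyset>\<close> or in \<open>[f]\<close>, so on \<open>[f]\<close> the fine and very strong
  topologies agree. Hence \<open>g \<mapsto> g - f\<close> is a homeomorphism \<open>[f] \<cong> C\<^sup>\<infinity>\<^sub>c(M,E)\<close>. A transition
  map is either empty or the translation \<open>h \<mapsto> h + (f - g)\<close> of \<open>C\<^sup>\<infinity>\<^sub>c(M,E)\<close>, whose iterated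
  directional derivatives are \<open>y\<^sub>1\<close> and then \<open>0\<close>. These derivatives are well defined because
  the very strong topology is Hausdorff: continuous seminorms (Minkowski functionals of convex
  balanced neighbourhoods of \<open>0\<close>) separate the points of \<open>E\<close>, and elementary neighbourhoods
  supported at a single point then separate smooth maps.\<close>

section \<open>Locally convex spaces\<close>

lemma lcs_continuous_map_add:
  assumes "lcs TE" "continuous_map X TE f" "continuous_map X TE g"
  shows "continuous_map X TE (\<lambda>x. f x + g x)"
proof -
  have "continuous_map (prod_topology TE TE) TE (\<lambda>(x, y). x + y)"
    using assms(1) by (simp add: lcs_def)
  then have "continuous_map X TE ((\<lambda>(x, y). x + y) \<circ> (\<lambda>x. (f x, g x)))"
    by (rule continuous_map_compose[rotated]) (simp add: continuous_map_paired assms)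
  then show ?thesis by (simp add: o_def)
qed

lemma lcs_continuous_map_scaleR:
  assumes "lcs TE" "continuous_map X euclideanreal a" "continuous_map X TE f"
  shows "continuous_map X TE (\<lambda>x. a x *\<^sub>R f x)"
proof -
  have "continuous_map (prod_topology euclideanreal TE) TE (\<lambda>(c, x). c *\<^sub>R x)"
    using assms(1) by (simp add: lcs_def)
  then have "continuous_map X TE ((\<lambda>(c, x). c *\<^sub>R x) \<circ> (\<lambda>x. (a x, f x)))"
    by (rule continuous_map_compose[rotated]) (simp add: continuous_map_paired assms)
  then show ?thesis by (simp add: o_def)
qed

lemma lcs_continuous_map_lincomb:
  assumes "lcs TE" "continuous_map X TE f" "continuous_map X TE g"
  shows "continuous_map X TE (\<lambda>x. a *\<^sub>R f x + b *\<^sub>R g x)"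
  by (intro lcs_continuous_map_add lcs_continuous_map_scaleR assms
        continuous_map_const[THEN iffD2]) auto

lemma lcs_limitin_lincomb:
  assumes "lcs TE" "limitin TE f l F" "limitin TE g m F"
  shows "limitin TE (\<lambda>x. a *\<^sub>R f x + b *\<^sub>R g x) (a *\<^sub>R l + b *\<^sub>R m) F"
proof -
  have "continuous_map (prod_topology TE TE) TE (\<lambda>(x, y). a *\<^sub>R x + b *\<^sub>R y)"
    using lcs_continuous_map_lincomb[OF assms(1) continuous_map_fst continuous_map_snd]
    by (simp add: case_prod_unfold)
  moreover have "limitin (prod_topology TE TE) (\<lambda>x. (f x, g x)) (l, m) F"
    using assms by (simp add: limitin_pairwise o_def)
  ultimately show ?thesis
    using continuous_map_limit by (fastforce simp: o_def)
qed

lemma lcs_continuous_map_affine: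
  assumes "lcs TE" "topspace TE = UNIV"
  shows "continuous_map TE TE (\<lambda>x. a *\<^sub>R x + b)"
  using lcs_continuous_map_lincomb[OF assms(1) continuous_map_id continuous_map_const[THEN iffD2],
      of b a 1] assms(2) by simp

lemma lcs_continuous_map_ray:
  assumes "lcs TE" "topspace TE = UNIV"
  shows "continuous_map euclideanreal TE (\<lambda>s. s *\<^sub>R x)"
  using lcs_continuous_map_scaleR[OF assms(1), of euclideanreal id "\<lambda>_. x"] assms(2) by simp

definition minkowski_functional :: "'v::real_vector set \<Rightarrow> 'v \<Rightarrow> real" where
  "minkowski_functional D x = Inf {t. 0 < t \<and> (1 / t) *\<^sub>R x \<in> D}"

context
  fixes D :: "'v::real_vector set"
  assumes convex: "convex D" and zero: "0 \<in> D" and symmetric: "\<And>x. x \<in> D \<Longrightarrow> - x \<in> D"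
    and absorbing: "\<And>x. \<exists>t>0. (1 / t) *\<^sub>R x \<in> D"
begin

private abbreviation "p \<equiv> minkowski_functional D"

private lemma scale_down: "x \<in> D \<Longrightarrow> 0 \<le> s \<Longrightarrow> s \<le> 1 \<Longrightarrow> s *\<^sub>R x \<in> D"
  using convexD[OF convex _ zero, of x s "1 - s"] by simp

lemma minkowski_functional_le: "0 < t \<Longrightarrow> (1 / t) *\<^sub>R x \<in> D \<Longrightarrow> p x \<le> t"
  unfolding minkowski_functional_def by (rule cInf_lower) (auto intro: bdd_belowI[of _ 0])

lemma minkowski_functional_ge:
  assumes "\<And>t. 0 < t \<Longrightarrow> (1 / t) *\<^sub>R x \<in> D \<Longrightarrow> a \<le> t"
  shows "a \<le> p x"
  unfolding minkowski_functional_def using absorbing[of x] assms by (intro cInf_greatest) auto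

lemma minkowski_functional_nonneg: "0 \<le> p x"
  by (rule minkowski_functional_ge) simp

lemma minkowski_functional_less_imp_mem:
  assumes "p x < r"
  shows "(1 / r) *\<^sub>R x \<in> D"
proof -
  have "\<exists>t\<in>{t. 0 < t \<and> (1 / t) *\<^sub>R x \<in> D}. t < r"
    using assms absorbing[of x] unfolding minkowski_functional_def
    by (subst cInf_less_iff[symmetric]) (auto intro: bdd_belowI[of _ 0])
  then obtain t where t: "0 < t" "(1 / t) *\<^sub>R x \<in> D" "t < r" by blast
  then have "(t / r) *\<^sub>R ((1 / t) *\<^sub>R x) \<in> D"
    by (intro scale_down[OF t(2)]) (use t in \<open>auto simp: divide_le_eq_1\<close>)
  then show ?thesis using t by simp
qed

lemma minkowski_functional_scaleR: "p (c *\<^sub>R x) = \<bar>c\<bar> * p x"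
proof -
  have le: "p (c *\<^sub>R x) \<le> \<bar>c\<bar> * p x" if "c \<noteq> 0" for c x
  proof -
    have "p (c *\<^sub>R x) / \<bar>c\<bar> \<le> p x"
    proof (rule minkowski_functional_ge)
      fix t assume t: "0 < t" "(1 / t) *\<^sub>R x \<in> D"
      then have "(1 / (\<bar>c\<bar> * t)) *\<^sub>R (c *\<^sub>R x) \<in> D"
        using symmetric[OF t(2)] that by (cases "c > 0") (auto simp: mult_neg_pos)
      then have "p (c *\<^sub>R x) \<le> \<bar>c\<bar> * t"
        using t that by (intro minkowski_functional_le) auto
      then show "p (c *\<^sub>R x) / \<bar>c\<bar> \<le> t" using that by (simp add: field_simps)
    qed
    then show ?thesis using that by (simp add: field_simps)
  qed
  show ?thesis
  proof (cases "c = 0")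
    case True
    have "p 0 \<le> e" if "e > 0" for e
      using minkowski_functional_le[of e 0] that zero by simp
    then have "p 0 \<le> 0" by (meson dense not_le)
    then show ?thesis using True minkowski_functional_nonneg[of 0] by simp
  next
    case False
    have "\<bar>c\<bar> * p x = \<bar>c\<bar> * p (inverse c *\<^sub>R (c *\<^sub>R x))" using False by simp
    also have "\<dots> \<le> p (c *\<^sub>R x)"
      using le[of "inverse c" "c *\<^sub>R x"] False by (simp add: field_simps abs_inverse)
    finally show ?thesis using le[OF False, of x] by linarith
  qed
qed

lemma minkowski_functional_triangle: "p (x + y) \<le> p x + p y"
proof -
  have "p (x + y) - p y \<le> p x"
  proof (rule minkowski_functional_ge)
    fix s assume s: "0 < s" "(1 / s) *\<^sub>R x \<in> D"
    have "p (x + y) - s \<le> p y"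
    proof (rule minkowski_functional_ge)
      fix t assume t: "0 < t" "(1 / t) *\<^sub>R y \<in> D"
      \<comment> \<open>\<open>(x + y)/(s + t)\<close> is a convex combination of \<open>x/s\<close> and \<open>y/t\<close>\<close>
      have "(s / (s + t)) *\<^sub>R ((1 / s) *\<^sub>R x) + (t / (s + t)) *\<^sub>R ((1 / t) *\<^sub>R y) \<in> D"
        using s t by (intro convexD[OF convex]) (auto simp: add_divide_distrib[symmetric])
      then have "p (x + y) \<le> s + t"
        using s t by (intro minkowski_functional_le) (auto simp: scaleR_add_right)
      then show "p (x + y) - s \<le> t" by simp
    qed
    then show "p (x + y) - p y \<le> s" by simp
  qed
  then show ?thesis by simp
qed

end

lemma lcs_open_absorbing:
  assumes "lcs TE" "topspace TE = UNIV" "openin TE D" "0 \<in> D"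
  shows "\<exists>t>0. (1 / t) *\<^sub>R x \<in> D"
proof -
  have "openin euclideanreal {s \<in> topspace euclideanreal. s *\<^sub>R x \<in> D}"
    by (rule openin_continuous_map_preimage[OF lcs_continuous_map_ray[OF assms(1,2)] assms(3)])
  then have "open {s. s *\<^sub>R x \<in> D}" by simp
  moreover have "0 \<in> {s. s *\<^sub>R x \<in> D}" using assms(4) by simp
  ultimately obtain e where e: "e > 0" "ball 0 e \<subseteq> {s. s *\<^sub>R x \<in> D}"
    by (meson open_contains_ball)
  then have "(e / 2) *\<^sub>R x \<in> D" by (auto simp: subset_iff)
  then show ?thesis using e(1) by (intro exI[of _ "2 / e"]) auto
qed

lemma lcs_continuous_map_minkowski_functional:
  assumes L: "lcs TE" and T: "topspace TE = UNIV"
    and D: "openin TE D" "convex D" "0 \<in> D" "\<And>x. x \<in> D \<Longrightarrow> - x \<in> D"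
  shows "continuous_map TE euclideanreal (minkowski_functional D)"
  unfolding Met_TC.continuous_map_to_metric[simplified mtopology_is_euclidean mball_eq_ball]
proof (intro ballI allI impI)
  have absorbing: "\<And>x. \<exists>t>0. (1 / t) *\<^sub>R x \<in> D"
    by (rule lcs_open_absorbing[OF L T D(1,3)])
  define p where "p = minkowski_functional D"
  note mf = minkowski_functional_le[OF D(2-4) absorbing, folded p_def]
    minkowski_functional_scaleR[OF D(2-4) absorbing, folded p_def]
    minkowski_functional_triangle[OF D(2-4) absorbing, folded p_def]
  fix y and e :: real assume e: "0 < e"
  define N where "N = {x. (2 / e) *\<^sub>R x + (- (2 / e) *\<^sub>R y) \<in> D}"
  have "openin TE {x \<in> topspace TE. (2 / e) *\<^sub>R x + (- (2 / e) *\<^sub>R y) \<in> D}"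
    by (rule openin_continuous_map_preimage[OF lcs_continuous_map_affine[OF L T] D(1)])
  then have "openin TE N" unfolding N_def T by simp
  moreover have "y \<in> N" using D by (simp add: N_def)
  moreover have "p x \<in> ball (p y) e" if "x \<in> N" for x
  proof -
    have "p (x - y) \<le> e / 2"
      using that e by (intro mf(1)) (auto simp: N_def algebra_simps)
    moreover have "p x \<le> p y + p (x - y)" "p y \<le> p x + p (x - y)"
      using mf(3)[of y "x - y"] mf(3)[of x "y - x"] mf(2)[of "-1" "x - y"] by simp_all
    ultimately show ?thesis using e by (simp add: dist_real_def abs_less_iff)
  qed
  ultimately show "\<exists>U. openin TE U \<and> y \<in> U \<and> (\<forall>x\<in>U. minkowski_functional D x \<in> ball (minkowski_functional D y) e)"
    unfolding p_def by blast
qed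

lemma lcs_separating_seminorm:
  fixes TE :: "'e::real_vector topology"
  assumes L: "lcs TE" and T: "topspace TE = UNIV" and v: "v \<noteq> 0"
  shows "\<exists>p. cont_seminorm TE p \<and> p v > 0"
proof -
  obtain U V where UV: "openin TE U" "openin TE V" "0 \<in> U" "v \<in> V" "disjnt U V"
    using L v T unfolding lcs_def Hausdorff_space_def by (metis UNIV_I)
  then obtain C where C: "openin TE C" "convex C" "0 \<in> C" "C \<subseteq> U"
    using L unfolding lcs_def by blast
  \<comment> \<open>the balanced convex \<open>0\<close>-neighbourhood avoiding \<open>v\<close>\<close>
  define D where "D = C \<inter> uminus -` C"
  have "openin TE {x \<in> topspace TE. - x \<in> C}"
    using lcs_continuous_map_affine[OF L T, of "-1" 0] C(1)
    by (intro openin_continuous_map_preimage) auto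
  then have D_open: "openin TE D" unfolding D_def using C(1) T by (simp add: openin_Int vimage_def)
  have D_convex: "convex D"
    unfolding D_def by (intro convex_Int C(2) convex_linear_vimage linear_uminus)
  have D: "0 \<in> D" "\<And>x. x \<in> D \<Longrightarrow> - x \<in> D" "v \<notin> D"
    using C UV by (auto simp: D_def disjnt_def)
  have absorbing: "\<And>x. \<exists>t>0. (1 / t) *\<^sub>R x \<in> D"
    by (rule lcs_open_absorbing[OF L T D_open D(1)])
  have "cont_seminorm TE (minkowski_functional D)"
    unfolding cont_seminorm_def
    using minkowski_functional_scaleR[OF D_convex D(1,2) absorbing]
      minkowski_functional_triangle[OF D_convex D(1,2) absorbing]
      lcs_continuous_map_minkowski_functional[OF L T D_open D_convex D(1,2)]
    by blast
  moreover have "minkowski_functional D v > 0"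
    using minkowski_functional_less_imp_mem[OF D_convex D(1,2) absorbing, of v 1] D(3) by force
  ultimately show ?thesis by blast
qed

context
  fixes TE :: "'e::real_vector topology" and p
  assumes p: "cont_seminorm TE p" and T: "topspace TE = UNIV"
begin

lemma cont_seminorm_triangle: "p (u + v) \<le> p u + p v"
  using p T unfolding cont_seminorm_def by blast

lemma cont_seminorm_minus: "p (- v) = p v"
proof -
  have "p ((- 1) *\<^sub>R v) = \<bar>- 1\<bar> * p v" using p T unfolding cont_seminorm_def by blast
  then show ?thesis by simp
qed

lemma cont_seminorm_zero: "p 0 = 0"
proof -
  have "p (0 *\<^sub>R 0) = \<bar>0\<bar> * p 0" using p T unfolding cont_seminorm_def by blast
  then show ?thesis by simp
qed

lemma cont_seminorm_nonneg: "0 \<le> p v"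
  using cont_seminorm_triangle[of v "- v"] cont_seminorm_minus[of v] cont_seminorm_zero by simp

end

section \<open>Bastiani calculus\<close>

lemma dirderiv_eqI:
  assumes "Hausdorff_space TF" "limitin TF (diffquot f x y) l (at (0::real))"
  shows "dirderiv TF f x y = l"
  unfolding dirderiv_def
proof (rule the_equality)
  show "\<And>l'. limitin TF (diffquot f x y) l' (at 0) \<Longrightarrow> l' = l"
    using limitin_Hausdorff_unique[OF _ assms(2) trivial_limit_at assms(1)] by blast
qed (rule assms(2))

lemma dd_cong: "(\<And>i. i < k \<Longrightarrow> ys i = ys' i) \<Longrightarrow> dd TF F k x ys = dd TF F k x ys'"
proof (induction k arbitrary: x)
  case (Suc k)
  then have "(\<lambda>z. dd TF F k z ys) = (\<lambda>z. dd TF F k z ys')" by auto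
  then show ?case using Suc.prems by simp
qed simp

lemma bastiani_smoothD:
  assumes "bastiani_smooth TE TF U F"
  shows "openin TE U" "continuous_map (subtopology TE U) TF F"
    "continuous_map (prod_topology (subtopology TE U) (product_topology (\<lambda>_. TE) {..<k})) TF
       (\<lambda>(x, ys). dd TF F k x ys)"
  using assms by (simp_all add: bastiani_smooth_def)

lemma bastiani_smooth_diffquot_limit:
  assumes "bastiani_smooth (euclidean :: 'v::real_normed_vector topology) TF U F" "x \<in> U"
  shows "\<exists>l. limitin TF (diffquot (\<lambda>z. dd TF F k z ys) x y) l (at 0)"
proof -
  have "\<exists>l. limitin TF (diffquot (\<lambda>z. dd TF F k z (restrict ys {..<k})) x y) l (at 0)"
    using assms unfolding bastiani_smooth_def by simp
  moreover have "dd TF F k z (restrict ys {..<k}) = dd TF F k z ys" for z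
    by (rule dd_cong) simp
  ultimately show ?thesis by simp
qed

lemma eventually_diffquot_cong:
  fixes x y :: "'v::real_normed_vector"
  assumes "open U" "x \<in> U" "\<And>z. z \<in> U \<Longrightarrow> F z = G z"
  shows "eventually (\<lambda>t. diffquot F x y t = diffquot G x y t) (at 0)"
proof -
  have "((\<lambda>t. x + t *\<^sub>R y) \<longlongrightarrow> x + 0 *\<^sub>R y) (at (0::real))"
    by (rule tendsto_add[OF tendsto_const tendsto_scaleR[OF tendsto_ident_at tendsto_const]])
  then have "eventually (\<lambda>t. x + t *\<^sub>R y \<in> U) (at (0::real))"
    using assms(1,2) topological_tendstoD by fastforce
  then show ?thesis
  proof (rule eventually_mono)
    fix t assume "x + t *\<^sub>R y \<in> U"
    then show "diffquot F x y t = diffquot G x y t" using assms(2,3) by (simp add: diffquot_def)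
  qed
qed

lemma diffquot_lincomb:
  "diffquot (\<lambda>z. a *\<^sub>R F z + b *\<^sub>R G z) x y t = a *\<^sub>R diffquot F x y t + b *\<^sub>R diffquot G x y t"
  unfolding diffquot_def by (simp add: algebra_simps)

lemma limitin_diffquot_lincomb:
  fixes x y :: "'v::real_normed_vector"
  assumes "lcs TF" "open U" "x \<in> U" "\<And>z. z \<in> U \<Longrightarrow> H z = a *\<^sub>R F z + b *\<^sub>R G z"
    and "limitin TF (diffquot F x y) lF (at 0)" "limitin TF (diffquot G x y) lG (at 0)"
  shows "limitin TF (diffquot H x y) (a *\<^sub>R lF + b *\<^sub>R lG) (at 0)"
proof (rule limitin_transform_eventually)
  show "limitin TF (\<lambda>t. a *\<^sub>R diffquot F x y t + b *\<^sub>R diffquot G x y t) (a *\<^sub>R lF + b *\<^sub>R lG) (at 0)"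
    by (rule lcs_limitin_lincomb[OF assms(1,5,6)])
  have "eventually (\<lambda>t. diffquot H x y t = diffquot (\<lambda>z. a *\<^sub>R F z + b *\<^sub>R G z) x y t) (at 0)"
    by (rule eventually_diffquot_cong) (use assms in auto)
  then show "eventually (\<lambda>t. a *\<^sub>R diffquot F x y t + b *\<^sub>R diffquot G x y t = diffquot H x y t) (at 0)"
    by (rule eventually_mono) (simp add: diffquot_lincomb)
qed

lemma dd_lincomb:
  fixes F G :: "'v::real_normed_vector \<Rightarrow> 'w::real_vector"
  assumes L: "lcs TF" and F: "bastiani_smooth euclidean TF U F" and G: "bastiani_smooth euclidean TF U G"
    and "x \<in> U"
  shows "dd TF (\<lambda>x. a *\<^sub>R F x + b *\<^sub>R G x) k x ys = a *\<^sub>R dd TF F k x ys + b *\<^sub>R dd TF G k x ys"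
  using \<open>x \<in> U\<close>
proof (induction k arbitrary: x)
  case (Suc k)
  have H: "Hausdorff_space TF" using L by (simp add: lcs_def)
  have U: "open U" using bastiani_smoothD(1)[OF F] by simp
  obtain lF lG where
    lF: "limitin TF (diffquot (\<lambda>z. dd TF F k z ys) x (ys k)) lF (at 0)" and
    lG: "limitin TF (diffquot (\<lambda>z. dd TF G k z ys) x (ys k)) lG (at 0)"
    using bastiani_smooth_diffquot_limit[OF F Suc.prems] bastiani_smooth_diffquot_limit[OF G Suc.prems]
    by blast
  have "limitin TF (diffquot (\<lambda>z. dd TF (\<lambda>x. a *\<^sub>R F x + b *\<^sub>R G x) k z ys) x (ys k))
          (a *\<^sub>R lF + b *\<^sub>R lG) (at 0)"
    by (rule limitin_diffquot_lincomb[OF L U Suc.prems Suc.IH lF lG])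
  then have "dirderiv TF (\<lambda>z. dd TF (\<lambda>x. a *\<^sub>R F x + b *\<^sub>R G x) k z ys) x (ys k)
               = a *\<^sub>R lF + b *\<^sub>R lG"
    by (rule dirderiv_eqI[OF H])
  then show ?case using dirderiv_eqI[OF H lF] dirderiv_eqI[OF H lG] by simp
qed simp

lemma bastiani_smooth_lincomb:
  fixes F G :: "'v::real_normed_vector \<Rightarrow> 'w::real_vector"
  assumes L: "lcs TF" and F: "bastiani_smooth euclidean TF U F" and G: "bastiani_smooth euclidean TF U G"
  shows "bastiani_smooth euclidean TF U (\<lambda>x. a *\<^sub>R F x + b *\<^sub>R G x)"
proof -
  have U: "open U" using bastiani_smoothD(1)[OF F] by simp
  have lim: "\<exists>l. limitin TF (diffquot (\<lambda>z. dd TF (\<lambda>x. a *\<^sub>R F x + b *\<^sub>R G x) k z ys) x y) l (at 0)"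
    if x: "x \<in> U" for k x ys y
  proof -
    obtain lF lG where
      lF: "limitin TF (diffquot (\<lambda>z. dd TF F k z ys) x y) lF (at 0)" and
      lG: "limitin TF (diffquot (\<lambda>z. dd TF G k z ys) x y) lG (at 0)"
      using bastiani_smooth_diffquot_limit[OF F x] bastiani_smooth_diffquot_limit[OF G x] by blast
    show ?thesis using limitin_diffquot_lincomb[OF L U x dd_lincomb[OF L F G] lF lG] by blast
  qed
  have cont_dd: "continuous_map (prod_topology (subtopology euclidean U) (product_topology (\<lambda>_. euclidean :: 'v topology) {..<k})) TF
      (\<lambda>(x, ys). dd TF (\<lambda>x. a *\<^sub>R F x + b *\<^sub>R G x) k x ys)" for k
  proof (rule continuous_map_eq)
    show "continuous_map (prod_topology (subtopology euclidean U) (product_topology (\<lambda>_. euclidean :: 'v topology) {..<k})) TF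
        (\<lambda>p. a *\<^sub>R (case p of (x, ys) \<Rightarrow> dd TF F k x ys) + b *\<^sub>R (case p of (x, ys) \<Rightarrow> dd TF G k x ys))"
      using L bastiani_smoothD(3)[OF F] bastiani_smoothD(3)[OF G] by (rule lcs_continuous_map_lincomb)
    fix p assume "p \<in> topspace (prod_topology (subtopology euclidean U) (product_topology (\<lambda>_. euclidean :: 'v topology) {..<k}))"
    then have "fst p \<in> U"
      unfolding topspace_prod_topology topspace_subtopology mem_Times_iff by blast
    then show "a *\<^sub>R (case p of (x, ys) \<Rightarrow> dd TF F k x ys) + b *\<^sub>R (case p of (x, ys) \<Rightarrow> dd TF G k x ys)
        = (case p of (x, ys) \<Rightarrow> dd TF (\<lambda>x. a *\<^sub>R F x + b *\<^sub>R G x) k x ys)"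
      using dd_lincomb[OF L F G, of "fst p"] by (simp add: case_prod_unfold)
  qed
  have cont: "continuous_map (subtopology euclidean U) TF (\<lambda>x. a *\<^sub>R F x + b *\<^sub>R G x)"
    using L bastiani_smoothD(2)[OF F] bastiani_smoothD(2)[OF G] by (rule lcs_continuous_map_lincomb)
  show ?thesis
    unfolding bastiani_smooth_def using U by (intro conjI allI ballI lim cont_dd cont) simp_all
qed

lemma diffquot_const: "diffquot (\<lambda>_. c) x y = (\<lambda>_. 0)"
  by (simp add: fun_eq_iff diffquot_def)

lemma dd_zero:
  assumes "Hausdorff_space TF" "0 \<in> topspace TF"
  shows "dd TF (\<lambda>_. 0) k x ys = 0"
proof (induction k arbitrary: x)
  case (Suc k)
  have "limitin TF (diffquot (\<lambda>z. dd TF (\<lambda>_. 0) k z ys) x (ys k)) 0 (at 0)"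
    using assms(2) by (simp add: Suc.IH diffquot_const)
  then show ?case using dirderiv_eqI[OF assms(1)] by simp
qed simp

lemma bastiani_smooth_zero:
  assumes "lcs TF" "openin TE U"
  shows "bastiani_smooth TE TF U (\<lambda>_. 0)"
proof -
  have H: "Hausdorff_space TF" and Z: "0 \<in> topspace TF"
    using assms(1) by (simp_all add: lcs_def subspace_0)
  show ?thesis
    using assms(2) Z unfolding bastiani_smooth_def
    by (intro conjI allI ballI exI[of _ 0]) (simp_all add: dd_zero[OF H Z] diffquot_const case_prod_unfold)
qed

lemma limitin_diffquot_affine:
  assumes "subspace (topspace X)" "\<And>w. w \<in> topspace X \<Longrightarrow> G w = b *\<^sub>R w + a"
    and "z \<in> topspace X" "y \<in> topspace X"
  shows "limitin X (diffquot G z y) (b *\<^sub>R y) (at 0)"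
proof (rule limitin_eventually)
  show "b *\<^sub>R y \<in> topspace X" using assms(1,4) by (rule subspace_mul)
  have "diffquot G z y t = b *\<^sub>R y" if "t \<noteq> 0" for t
  proof -
    have "z + t *\<^sub>R y \<in> topspace X" using assms(1,3,4) by (simp add: subspace_add subspace_mul)
    then show ?thesis
      using that assms(2,3) by (simp add: diffquot_def algebra_simps)
  qed
  then show "eventually (\<lambda>t. diffquot G z y t = b *\<^sub>R y) (at 0)"
    by (simp add: eventually_at_filter)
qed

lemma dd_translation:
  assumes X: "Hausdorff_space X" "subspace (topspace X)"
    and F: "\<And>h. h \<in> topspace X \<Longrightarrow> F h = h + c"
    and "z \<in> topspace X" "\<And>i. i < k \<Longrightarrow> ys i \<in> topspace X"
  shows "dd X F k z ys = (if k = 0 then z + c else if k = 1 then ys 0 else 0)"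
  using assms(4,5)
proof (induction k arbitrary: z)
  case (Suc k)
  have "dd X F k w ys = (if k = 0 then 1 else 0) *\<^sub>R w + (if k = 0 then c else if k = 1 then ys 0 else 0)"
    if "w \<in> topspace X" for w
    using Suc.IH[OF that] Suc.prems(2) by simp
  then have "limitin X (diffquot (\<lambda>w. dd X F k w ys) z (ys k)) ((if k = 0 then 1 else 0) *\<^sub>R ys k) (at 0)"
    using Suc.prems by (intro limitin_diffquot_affine[OF X(2)]) auto
  then show ?case using dirderiv_eqI[OF X(1)] by auto
qed (simp add: F)

lemma bastiani_smooth_translation:
  assumes X: "Hausdorff_space X" "subspace (topspace X)" and c: "continuous_map X X (\<lambda>h. h + c)"
    and F: "\<And>h. h \<in> topspace X \<Longrightarrow> F h = h + c"
  shows "bastiani_smooth X X (topspace X) F"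
proof -
  have dd_F: "dd X F k w ys = (if k = 0 then w + c else if k = 1 then ys 0 else 0)"
    if "w \<in> topspace X" "ys \<in> {..<k} \<rightarrow>\<^sub>E topspace X" for k w ys
  proof (rule dd_translation[OF X F that(1)])
    show "\<And>i. i < k \<Longrightarrow> ys i \<in> topspace X" using that(2) by (simp add: PiE_iff)
  qed
  have lim: "\<exists>l. limitin X (diffquot (\<lambda>w. dd X F k w ys) z y) l (at 0)"
    if "z \<in> topspace X" "ys \<in> {..<k} \<rightarrow>\<^sub>E topspace X" "y \<in> topspace X" for k z ys y
  proof -
    have "dd X F k w ys = (if k = 0 then 1 else 0) *\<^sub>R w + (if k = 0 then c else if k = 1 then ys 0 else 0)"
      if "w \<in> topspace X" for w
      using dd_F[OF that \<open>ys \<in> _\<close>] by simp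
    then have "limitin X (diffquot (\<lambda>w. dd X F k w ys) z y) ((if k = 0 then 1 else 0) *\<^sub>R y) (at 0)"
      by (rule limitin_diffquot_affine[OF X(2) _ that(1,3)])
    then show ?thesis by blast
  qed
  have cont_dd: "continuous_map (prod_topology (subtopology X (topspace X)) (product_topology (\<lambda>_. X) {..<k})) X
      (\<lambda>(z, ys). dd X F k z ys)" for k
  proof (rule continuous_map_eq)
    let ?P = "prod_topology (subtopology X (topspace X)) (product_topology (\<lambda>_. X) {..<k})"
    consider "k = 0" | "k = 1" | "k \<ge> 2" by linarith
    then show "continuous_map ?P X (\<lambda>p. if k = 0 then fst p + c else if k = 1 then snd p 0 else 0)"
    proof cases
      case 1
      then show ?thesis
        using continuous_map_compose[OF continuous_map_fst, of "subtopology X (topspace X)"] c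
        by (simp add: o_def)
    next
      case 2
      then show ?thesis
        using continuous_map_compose[OF continuous_map_snd continuous_map_product_projection, of 0 "{..<k}"]
        by (simp add: o_def)
    qed (use subspace_0[OF X(2)] in simp)
    fix p assume "p \<in> topspace ?P"
    then have "fst p \<in> topspace X" "snd p \<in> {..<k} \<rightarrow>\<^sub>E topspace X"
      unfolding topspace_prod_topology topspace_subtopology topspace_product_topology mem_Times_iff
      by blast+
    then show "(if k = 0 then fst p + c else if k = 1 then snd p 0 else 0) = (case p of (z, ys) \<Rightarrow> dd X F k z ys)"
      using dd_F by (simp add: case_prod_unfold)
  qed
  have "continuous_map (subtopology X (topspace X)) X F"
    using c F by (simp add: continuous_map_eq)
  then show ?thesis
    unfolding bastiani_smooth_def by (intro conjI allI ballI lim cont_dd) simp_all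
qed

lemma bastiani_smooth_empty: "bastiani_smooth X Y {} F"
  by (simp add: bastiani_smooth_def continuous_map_def)

section \<open>Smooth maps with compact support\<close>

lemma chart_image_open: "(U, \<phi>) \<in> mcharts TM \<A> \<Longrightarrow> open (\<phi> ` U)"
  by (simp add: mcharts_def is_chart_def)

lemma subspace_Cinf:
  assumes "lcs TE"
  shows "subspace (Cinf TM \<A> TE)"
proof -
  have lincomb: "a *\<^sub>R f + b *\<^sub>R g \<in> Cinf TM \<A> TE"
    if "f \<in> Cinf TM \<A> TE" "g \<in> Cinf TM \<A> TE" for f g a b
    unfolding Cinf_def
  proof (clarify)
    fix U \<phi> assume "(U, \<phi>) \<in> mcharts TM \<A>"
    then have "bastiani_smooth euclidean TE (\<phi> ` U) (f \<circ> inv_into U \<phi>)"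
      "bastiani_smooth euclidean TE (\<phi> ` U) (g \<circ> inv_into U \<phi>)"
      using that by (auto simp: Cinf_def)
    from bastiani_smooth_lincomb[OF assms this, of a b]
    show "bastiani_smooth euclidean TE (\<phi> ` U) ((a *\<^sub>R f + b *\<^sub>R g) \<circ> inv_into U \<phi>)"
      by (simp add: o_def scaleR_fun_def)
  qed
  have "0 \<in> Cinf TM \<A> TE"
    using bastiani_smooth_zero[OF assms] chart_image_open by (fastforce simp: Cinf_def o_def)
  then show ?thesis
    using lincomb[of _ _ 1 1] lincomb[of _ _ _ 0] by (intro subspaceI) auto
qed

lemma compactin_closure_of_support_lincomb:
  fixes f g :: "'m \<Rightarrow> 'e::real_vector"
  assumes "compactin TM (TM closure_of {x \<in> topspace TM. f x \<noteq> 0})"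
    and "compactin TM (TM closure_of {x \<in> topspace TM. g x \<noteq> 0})"
  shows "compactin TM (TM closure_of {x \<in> topspace TM. a *\<^sub>R f x + b *\<^sub>R g x \<noteq> 0})"
proof (rule closed_compactin)
  show "compactin TM (TM closure_of {x \<in> topspace TM. f x \<noteq> 0} \<union> TM closure_of {x \<in> topspace TM. g x \<noteq> 0})"
    using assms by (rule compactin_Un)
  have "{x \<in> topspace TM. a *\<^sub>R f x + b *\<^sub>R g x \<noteq> 0}
          \<subseteq> {x \<in> topspace TM. f x \<noteq> 0} \<union> {x \<in> topspace TM. g x \<noteq> 0}"
    by auto
  then show "TM closure_of {x \<in> topspace TM. a *\<^sub>R f x + b *\<^sub>R g x \<noteq> 0}
      \<subseteq> TM closure_of {x \<in> topspace TM. f x \<noteq> 0} \<union> TM closure_of {x \<in> topspace TM. g x \<noteq> 0}"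
    unfolding closure_of_Un[symmetric] by (rule closure_of_mono)
qed simp

lemma subspace_Cc:
  assumes "lcs TE"
  shows "subspace (Cc TM \<A> TE)"
proof -
  have lincomb: "a *\<^sub>R f + b *\<^sub>R g \<in> Cc TM \<A> TE" if "f \<in> Cc TM \<A> TE" "g \<in> Cc TM \<A> TE" for f g a b
  proof -
    have "a *\<^sub>R f + b *\<^sub>R g \<in> Cinf TM \<A> TE"
      using that subspace_Cinf[OF assms, of TM \<A>] unfolding Cc_def
      by (intro subspace_add subspace_mul) auto
    moreover have "compactin TM (TM closure_of {x \<in> topspace TM. a *\<^sub>R f x + b *\<^sub>R g x \<noteq> 0})"
      using that unfolding Cc_def by (intro compactin_closure_of_support_lincomb) auto
    ultimately show ?thesis by (simp add: Cc_def scaleR_fun_def)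
  qed
  moreover have "0 \<in> Cc TM \<A> TE"
    using subspace_0[OF subspace_Cinf[OF assms]] by (simp add: Cc_def)
  ultimately show ?thesis
    using lincomb[of _ _ 1 1] lincomb[of _ _ _ 0] by (intro subspaceI) auto
qed

lemma Cc_subset_Cinf: "Cc TM \<A> TE \<subseteq> Cinf TM \<A> TE"
  by (auto simp: Cc_def)

lemma fclass_subset_Cinf: "fclass TM \<A> TE f \<subseteq> Cinf TM \<A> TE"
  by (auto simp: fclass_def)

context
  fixes TM :: "'m topology" and \<A> :: "('m set \<times> ('m \<Rightarrow> 'r::euclidean_space)) set"
    and TE :: "'e::real_vector topology"
  assumes lcs: "lcs TE"
begin

private lemma Cc_subspace: "subspace (Cc TM \<A> TE)"
  by (rule subspace_Cc[OF lcs])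

private lemma Cinf_subspace: "subspace (Cinf TM \<A> TE)"
  by (rule subspace_Cinf[OF lcs])

lemma fclass_iff:
  assumes "f \<in> Cinf TM \<A> TE"
  shows "g \<in> fclass TM \<A> TE f \<longleftrightarrow> g - f \<in> Cc TM \<A> TE"
proof -
  have "{x \<in> topspace TM. f x \<noteq> g x} = {x \<in> topspace TM. (g - f) x \<noteq> 0}" by auto
  moreover have "g \<in> Cinf TM \<A> TE \<longleftrightarrow> g - f \<in> Cinf TM \<A> TE"
    using assms subspace_add[OF Cinf_subspace, of "g - f" f] subspace_diff[OF Cinf_subspace] by fastforce
  ultimately show ?thesis by (auto simp: fclass_def Cc_def)
qed

lemma fclass_self: "f \<in> Cinf TM \<A> TE \<Longrightarrow> f \<in> fclass TM \<A> TE f"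
  using subspace_0[OF Cc_subspace] by (simp add: fclass_iff)

lemma image_diff_fclass:
  assumes "f \<in> Cinf TM \<A> TE"
  shows "(\<lambda>g. g - f) ` fclass TM \<A> TE f = Cc TM \<A> TE"
proof (intro equalityI subsetI)
  fix h assume "h \<in> Cc TM \<A> TE"
  then have "h + f \<in> fclass TM \<A> TE f" by (simp add: fclass_iff[OF assms])
  then show "h \<in> (\<lambda>g. g - f) ` fclass TM \<A> TE f" by (intro image_eqI[of _ _ "h + f"]) auto
qed (auto simp: fclass_iff[OF assms])

lemma inv_into_diff_fclass:
  assumes "f \<in> Cinf TM \<A> TE" "h \<in> Cc TM \<A> TE"
  shows "inv_into (fclass TM \<A> TE f) (\<lambda>g. g - f) h = h + f"
  using assms by (intro inv_into_f_eq) (auto simp: inj_on_def fclass_iff)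

lemma fclass_eq:
  assumes "f \<in> Cinf TM \<A> TE" "g \<in> Cinf TM \<A> TE" "fclass TM \<A> TE f \<inter> fclass TM \<A> TE g \<noteq> {}"
  shows "fclass TM \<A> TE f = fclass TM \<A> TE g"
proof -
  obtain h where "h - f \<in> Cc TM \<A> TE" "h - g \<in> Cc TM \<A> TE"
    using assms by (auto simp: fclass_iff)
  then have "g - f \<in> Cc TM \<A> TE"
    using subspace_diff[OF Cc_subspace] by fastforce
  then have "k - f \<in> Cc TM \<A> TE \<longleftrightarrow> k - g \<in> Cc TM \<A> TE" for k
    using subspace_diff[OF Cc_subspace, of "k - f" "g - f"] subspace_add[OF Cc_subspace, of "k - g" "g - f"]
    by (auto simp: algebra_simps)
  then show ?thesis using assms by (auto simp: fclass_iff)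
qed

end

section \<open>The very strong and fine very strong topologies\<close>

lemma continuous_map_into_topology_generated_by:
  assumes "\<And>x. x \<in> topspace X \<Longrightarrow> f x \<in> \<Union>\<S>"
    and "\<And>S. S \<in> \<S> \<Longrightarrow> openin X {x \<in> topspace X. f x \<in> S}"
  shows "continuous_map X (topology_generated_by \<S>) f"
  unfolding continuous_map_def
proof (intro conjI allI impI)
  show "f \<in> topspace X \<rightarrow> topspace (topology_generated_by \<S>)" using assms(1) by auto
  fix U assume "openin (topology_generated_by \<S>) U"
  then have "generate_topology_on \<S> U" by (simp add: openin_topology_generated_by_iff)
  then show "openin X {x \<in> topspace X. f x \<in> U}"
  proof (induction rule: generate_topology_on.induct)
    case (Int a b)
    have "{x \<in> topspace X. f x \<in> a \<inter> b} = {x \<in> topspace X. f x \<in> a} \<inter> {x \<in> topspace X. f x \<in> b}"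
      by auto
    then show ?case using Int by (simp add: openin_Int)
  next
    case (UN K)
    have "{x \<in> topspace X. f x \<in> \<Union>K} = (\<Union>k\<in>K. {x \<in> topspace X. f x \<in> k})" by auto
    then show ?case using UN by (auto intro!: openin_Union)
  qed (simp_all add: assms(2))
qed

lemma generate_topology_on_mono:
  "generate_topology_on \<S> U \<Longrightarrow> \<S> \<subseteq> \<T> \<Longrightarrow> generate_topology_on \<T> U"
  by (induction rule: generate_topology_on.induct) (auto intro: generate_topology_on.intros)

lemma subtopology_topology_generated_by_Un:
  assumes "A \<subseteq> \<Union>\<S>" "\<And>C. C \<in> \<C> \<Longrightarrow> C \<inter> A = {} \<or> A \<subseteq> C"
  shows "subtopology (topology_generated_by (\<S> \<union> \<C>)) A = subtopology (topology_generated_by \<S>) A"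
proof -
  have trace: "\<exists>V. generate_topology_on \<S> V \<and> U \<inter> A = V \<inter> A"
    if "generate_topology_on (\<S> \<union> \<C>) U" for U
    using that
  proof (induction rule: generate_topology_on.induct)
    case Empty
    then show ?case by (blast intro: generate_topology_on.Empty)
  next
    case (Int U U')
    then obtain V V' where "generate_topology_on \<S> V" "U \<inter> A = V \<inter> A"
      "generate_topology_on \<S> V'" "U' \<inter> A = V' \<inter> A" by blast
    then show ?case by (intro exI[of _ "V \<inter> V'"]) (auto intro: generate_topology_on.Int)
  next
    case (UN \<K>)
    then obtain V where V: "\<And>K. K \<in> \<K> \<Longrightarrow> generate_topology_on \<S> (V K) \<and> K \<inter> A = V K \<inter> A"
      by metis
    then show ?case
      by (intro exI[of _ "\<Union>(V ` \<K>)"]) (auto intro: generate_topology_on.UN)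
  next
    case (Basis S)
    consider "S \<in> \<S>" | "S \<in> \<C>" "S \<inter> A = {}" | "S \<in> \<C>" "A \<subseteq> S"
      using Basis assms(2) by blast
    then show ?case
    proof cases
      case 1
      then show ?thesis by (blast intro: generate_topology_on.Basis)
    next
      case 2
      then show ?thesis by (intro exI[of _ "{}"]) (simp add: generate_topology_on.Empty)
    next
      case 3
      have "generate_topology_on \<S> (\<Union>\<S>)"
        by (rule generate_topology_on.UN) (rule generate_topology_on.Basis)
      moreover have "S \<inter> A = \<Union>\<S> \<inter> A" using 3 assms(1) by blast
      ultimately show ?thesis by blast
    qed
  qed
  have "openin (subtopology (topology_generated_by (\<S> \<union> \<C>)) A) W
          \<longleftrightarrow> openin (subtopology (topology_generated_by \<S>) A) W" for W
    unfolding openin_subtopology openin_topology_generated_by_iff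
  proof
    assume "\<exists>U. generate_topology_on (\<S> \<union> \<C>) U \<and> W = U \<inter> A"
    then show "\<exists>V. generate_topology_on \<S> V \<and> W = V \<inter> A" using trace by metis
  next
    assume "\<exists>V. generate_topology_on \<S> V \<and> W = V \<inter> A"
    then show "\<exists>U. generate_topology_on (\<S> \<union> \<C>) U \<and> W = U \<inter> A"
      using generate_topology_on_mono[of \<S> _ "\<S> \<union> \<C>"] by blast
  qed
  then show ?thesis by (simp add: topology_eq)
qed

context
  fixes TM :: "'m topology" and \<A> :: "('m set \<times> ('m \<Rightarrow> 'r::euclidean_space)) set"
    and TE :: "'e::real_vector topology"
  assumes lcs: "lcs TE"
begin

lemma Cinf_in_basic_nbhds: "Cinf TM \<A> TE \<in> basic_nbhds TM \<A> TE"
  \<comment> \<open>the basic neighbourhood of \<open>0\<close> given by the empty family of elementary neighbourhoods\<close>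
  unfolding basic_nbhds_def
  using subspace_0[OF subspace_Cinf[OF lcs]] by (fastforce intro: openin_topspace)

lemma topspace_vS_top: "topspace (vS_top TM \<A> TE) = Cinf TM \<A> TE"
  using Cinf_in_basic_nbhds by (auto simp: vS_top_def basic_nbhds_def)

lemma topspace_vSc_top: "topspace (vSc_top TM \<A> TE) = Cc TM \<A> TE"
  using Cc_subset_Cinf by (auto simp: vSc_top_def topspace_vS_top)

lemma openin_vS_top_elem_nbhd:
  assumes "valid_endata TM \<A> TE d" "f \<in> Cinf TM \<A> TE"
  shows "openin (vS_top TM \<A> TE) (elem_nbhd TM \<A> TE f d)"
proof -
  have "Cinf TM \<A> TE \<inter> (\<Inter>d'\<in>{d}. elem_nbhd TM \<A> TE f d') \<in> basic_nbhds TM \<A> TE"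
    unfolding basic_nbhds_def
  proof (intro CollectI bexI[OF _ assms(2)] exI[of _ "{d}"] conjI)
    show "\<forall>x\<in>topspace TM. \<exists>W. openin TM W \<and> x \<in> W \<and> finite {d'\<in>{d}. fst d' \<inter> W \<noteq> {}}"
      by (auto intro: openin_topspace)
  qed (use assms(1) in auto)
  moreover have "Cinf TM \<A> TE \<inter> (\<Inter>d'\<in>{d}. elem_nbhd TM \<A> TE f d') = elem_nbhd TM \<A> TE f d"
    by (auto simp: elem_nbhd_def split: prod.splits)
  ultimately show ?thesis
    unfolding vS_top_def by (metis topology_generated_by_Basis)
qed

lemma elem_nbhd_translate:
  assumes "h \<in> Cinf TM \<A> TE" "c \<in> Cinf TM \<A> TE"
  shows "h + c \<in> elem_nbhd TM \<A> TE f d \<longleftrightarrow> h \<in> elem_nbhd TM \<A> TE (f - c) d"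
proof -
  have "h + c \<in> Cinf TM \<A> TE" using assms subspace_add[OF subspace_Cinf[OF lcs]] by blast
  then show ?thesis
    using assms by (auto simp: elem_nbhd_def algebra_simps split: prod.splits)
qed

lemma continuous_map_vS_top_translate:
  assumes c: "c \<in> Cinf TM \<A> TE"
  shows "continuous_map (vS_top TM \<A> TE) (vS_top TM \<A> TE) (\<lambda>h. h + c)"
  unfolding vS_top_def
proof (rule continuous_map_into_topology_generated_by)
  have Cinf_add: "h + c \<in> Cinf TM \<A> TE" if "h \<in> Cinf TM \<A> TE" for h
    using subspace_add[OF subspace_Cinf[OF lcs] that c] .
  then show "h + c \<in> \<Union>(basic_nbhds TM \<A> TE)"
    if "h \<in> topspace (topology_generated_by (basic_nbhds TM \<A> TE))" for h
    using that topspace_vS_top Cinf_in_basic_nbhds unfolding vS_top_def by blast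
  fix B assume "B \<in> basic_nbhds TM \<A> TE"
  then obtain f \<D> where f: "f \<in> Cinf TM \<A> TE" and \<D>: "\<forall>d\<in>\<D>. valid_endata TM \<A> TE d"
      "\<forall>x\<in>topspace TM. \<exists>W. openin TM W \<and> x \<in> W \<and> finite {d\<in>\<D>. fst d \<inter> W \<noteq> {}}"
    and B: "B = Cinf TM \<A> TE \<inter> (\<Inter>d\<in>\<D>. elem_nbhd TM \<A> TE f d)"
    unfolding basic_nbhds_def by blast
  have "{h \<in> topspace (topology_generated_by (basic_nbhds TM \<A> TE)). h + c \<in> B}
          = Cinf TM \<A> TE \<inter> (\<Inter>d\<in>\<D>. elem_nbhd TM \<A> TE (f - c) d)"
    using topspace_vS_top Cinf_add elem_nbhd_translate[OF _ c] unfolding B vS_top_def by auto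
  also have "\<dots> \<in> basic_nbhds TM \<A> TE"
    unfolding basic_nbhds_def using subspace_diff[OF subspace_Cinf[OF lcs] f c] \<D> by blast
  finally show "openin (topology_generated_by (basic_nbhds TM \<A> TE))
      {h \<in> topspace (topology_generated_by (basic_nbhds TM \<A> TE)). h + c \<in> B}"
    by (rule topology_generated_by_Basis)
qed

lemma homeomorphic_map_vS_top_translate:
  assumes "c \<in> Cinf TM \<A> TE"
  shows "homeomorphic_map (vS_top TM \<A> TE) (vS_top TM \<A> TE) (\<lambda>h. h + c)"
proof -
  have "- c \<in> Cinf TM \<A> TE" using subspace_neg[OF subspace_Cinf[OF lcs] assms] .
  then have "continuous_map (vS_top TM \<A> TE) (vS_top TM \<A> TE) (\<lambda>h. h - c)"
    using continuous_map_vS_top_translate by fastforce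
  then show ?thesis
    unfolding homeomorphic_map_maps homeomorphic_maps_def
    using continuous_map_vS_top_translate[OF assms] by (intro exI[of _ "\<lambda>h. h - c"]) auto
qed

lemma continuous_map_vSc_top_translate:
  assumes "c \<in> Cc TM \<A> TE"
  shows "continuous_map (vSc_top TM \<A> TE) (vSc_top TM \<A> TE) (\<lambda>h. h + c)"
  unfolding vSc_top_def continuous_map_in_subtopology
proof
  show "continuous_map (subtopology (vS_top TM \<A> TE) (Cc TM \<A> TE)) (vS_top TM \<A> TE) (\<lambda>h. h + c)"
    using assms Cc_subset_Cinf by (blast intro: continuous_map_from_subtopology continuous_map_vS_top_translate)
  show "(\<lambda>h. h + c) \<in> topspace (subtopology (vS_top TM \<A> TE) (Cc TM \<A> TE)) \<rightarrow> Cc TM \<A> TE"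
    using assms subspace_add[OF subspace_Cc[OF lcs]] by auto
qed

lemma subtopology_fS_top_fclass:
  assumes "f \<in> Cinf TM \<A> TE"
  shows "subtopology (fS_top TM \<A> TE) (fclass TM \<A> TE f) = subtopology (vS_top TM \<A> TE) (fclass TM \<A> TE f)"
  unfolding fS_top_def vS_top_def
proof (rule subtopology_topology_generated_by_Un)
  show "fclass TM \<A> TE f \<subseteq> \<Union>(basic_nbhds TM \<A> TE)"
    using fclass_subset_Cinf Cinf_in_basic_nbhds by blast
  show "C \<inter> fclass TM \<A> TE f = {} \<or> fclass TM \<A> TE f \<subseteq> C"
    if "C \<in> {fclass TM \<A> TE g | g. g \<in> Cinf TM \<A> TE}" for C
    using that fclass_eq[OF lcs assms] by blast
qed

end

lemma crnorm_singleton_0: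
  assumes "\<And>v. 0 \<le> p v"
  shows "crnorm TE g 0 {a} p = p (g a)"
proof -
  have "{p (dd TE g k a' \<alpha>) | a' \<alpha> k. a' \<in> {a} \<and> \<alpha> \<in> PiE {..<k} (\<lambda>_. Basis) \<and> k \<le> 0} = {p (g a)}"
    by auto
  then have "crnorm TE g 0 {a} p = Sup {0, p (g a)}" by (simp add: crnorm_def)
  also have "\<dots> = p (g a)" by (rule cSup_eq_maximum) (use assms in auto)
  finally show ?thesis .
qed

lemma inj_on_mchart: "(U, \<phi>) \<in> mcharts TM \<A> \<Longrightarrow> inj_on \<phi> U"
  using homeomorphic_imp_injective_map[of "subtopology TM U"] openin_subset[of TM U]
  by (auto simp: mcharts_def is_chart_def Int_absorb1)

lemma atlas_subset_mcharts: "smooth_manifold TM \<A> \<Longrightarrow> \<A> \<subseteq> mcharts TM \<A>"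
  by (auto simp: smooth_manifold_def mcharts_def)

lemma elem_nbhd_point:
  assumes "(U, \<phi>) \<in> mcharts TM \<A>" "x \<in> U" "\<And>v. 0 \<le> p v"
  shows "h \<in> elem_nbhd TM \<A> TE f ({x}, U, \<phi>, p, 0, \<epsilon>) \<longleftrightarrow> h \<in> Cinf TM \<A> TE \<and> p (h x - f x) < \<epsilon>"
  using inv_into_f_f[OF inj_on_mchart[OF assms(1)] assms(2)]
  by (simp add: elem_nbhd_def crnorm_singleton_0[OF assms(3)])

lemma Hausdorff_space_vS_top:
  assumes M: "smooth_manifold TM \<A>" "topspace TM = UNIV" and L: "lcs TE" and T: "topspace TE = UNIV"
  shows "Hausdorff_space (vS_top TM \<A> TE)"
  unfolding Hausdorff_space_def topspace_vS_top[OF L]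
proof (intro allI impI, elim conjE)
  fix h1 h2 assume h: "h1 \<in> Cinf TM \<A> TE" "h2 \<in> Cinf TM \<A> TE" "h1 \<noteq> h2"
  then obtain x where "h1 x \<noteq> h2 x" by auto
  then obtain p where p: "cont_seminorm TE p" "p (h1 x - h2 x) > 0"
    using lcs_separating_seminorm[OF L T, of "h1 x - h2 x"] by auto
  have "x \<in> (\<Union>(U, \<phi>)\<in>\<A>. U)" using M by (simp add: smooth_manifold_def)
  then obtain U \<phi> where U\<phi>: "(U, \<phi>) \<in> \<A>" "x \<in> U" by auto
  then have chart: "(U, \<phi>) \<in> mcharts TM \<A>" using atlas_subset_mcharts[OF M(1)] by blast
  define \<delta> where "\<delta> = p (h1 x - h2 x) / 2"
  define B where "B f = elem_nbhd TM \<A> TE f ({x}, U, \<phi>, p, 0, \<delta>)" for f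
  have nonneg: "\<And>v. 0 \<le> p v" by (rule cont_seminorm_nonneg[OF p(1) T])
  have B: "h \<in> B f \<longleftrightarrow> h \<in> Cinf TM \<A> TE \<and> p (h x - f x) < \<delta>" for h f
    unfolding B_def by (rule elem_nbhd_point[OF chart U\<phi>(2) nonneg])
  have "valid_endata TM \<A> TE ({x}, U, \<phi>, p, 0, \<delta>)"
    using chart U\<phi>(2) p M(2) by (simp add: valid_endata_def \<delta>_def)
  then have "openin (vS_top TM \<A> TE) (B h1)" "openin (vS_top TM \<A> TE) (B h2)"
    unfolding B_def using h by (simp_all add: openin_vS_top_elem_nbhd[OF L])
  moreover have "h1 \<in> B h1" "h2 \<in> B h2"
    using h p by (simp_all add: B \<delta>_def cont_seminorm_zero[OF p(1) T])
  moreover have "disjnt (B h1) (B h2)"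
    unfolding disjnt_def
  proof (rule equals0I)
    fix h assume "h \<in> B h1 \<inter> B h2"
    then have "p (h x - h1 x) < \<delta>" "p (h x - h2 x) < \<delta>" by (simp_all add: B)
    moreover have "p (h1 x - h2 x) \<le> p (- (h x - h1 x)) + p (h x - h2 x)"
      using cont_seminorm_triangle[OF p(1) T, of "- (h x - h1 x)" "h x - h2 x"] by simp
    ultimately show False
      using cont_seminorm_minus[OF p(1) T, of "h x - h1 x"] by (simp add: \<delta>_def)
  qed
  ultimately show "\<exists>V W. openin (vS_top TM \<A> TE) V \<and> openin (vS_top TM \<A> TE) W \<and> h1 \<in> V \<and> h2 \<in> W \<and> disjnt V W"
    by blast
qed

context
  fixes TM :: "'m topology" and \<A> :: "('m set \<times> ('m \<Rightarrow> 'r::euclidean_space)) set"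
    and TE :: "'e::real_vector topology"
  assumes lcs: "lcs TE"
begin

lemma topspace_fS_top: "topspace (fS_top TM \<A> TE) = Cinf TM \<A> TE"
proof -
  have "\<Union>(basic_nbhds TM \<A> TE) = Cinf TM \<A> TE"
    using topspace_vS_top[OF lcs] by (simp add: vS_top_def)
  moreover have "\<Union>{fclass TM \<A> TE f | f. f \<in> Cinf TM \<A> TE} \<subseteq> Cinf TM \<A> TE"
    using fclass_subset_Cinf[of TM \<A> TE] by blast
  ultimately show ?thesis
    unfolding fS_top_def topology_generated_by_topspace Union_Un_distrib by blast
qed

lemma homeomorphic_map_fclass:
  assumes "f \<in> Cinf TM \<A> TE"
  shows "homeomorphic_map (subtopology (vS_top TM \<A> TE) (fclass TM \<A> TE f)) (vSc_top TM \<A> TE)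
           (\<lambda>g. g - f)"
proof -
  have "homeomorphic_map (vS_top TM \<A> TE) (vS_top TM \<A> TE) (\<lambda>g. g + - f)"
    using homeomorphic_map_vS_top_translate[OF lcs] subspace_neg[OF subspace_Cinf[OF lcs] assms] .
  moreover have "(\<lambda>g. g + - f) ` (topspace (vS_top TM \<A> TE) \<inter> fclass TM \<A> TE f)
                   = topspace (vS_top TM \<A> TE) \<inter> Cc TM \<A> TE"
    using image_diff_fclass[OF lcs assms] fclass_subset_Cinf[of TM \<A> TE f] Cc_subset_Cinf[of TM \<A> TE]
    by (simp add: topspace_vS_top[OF lcs] Int_absorb1)
  ultimately show ?thesis
    unfolding vSc_top_def using homeomorphic_map_subtopologies by fastforce
qed

lemma bastiani_smooth_fclass_transition:
  assumes H: "Hausdorff_space (vS_top TM \<A> TE)"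
    and f: "f \<in> Cinf TM \<A> TE" and g: "g \<in> Cinf TM \<A> TE"
  shows "bastiani_smooth (vSc_top TM \<A> TE) (vSc_top TM \<A> TE)
           ((\<lambda>h. h - f) ` (fclass TM \<A> TE f \<inter> fclass TM \<A> TE g))
           (\<lambda>h. inv_into (fclass TM \<A> TE f) (\<lambda>k. k - f) h - g)"
proof (cases "fclass TM \<A> TE f \<inter> fclass TM \<A> TE g = {}")
  case True
  then show ?thesis by (simp add: bastiani_smooth_empty)
next
  case False
  \<comment> \<open>the classes coincide, so the transition map is the translation by \<open>f - g\<close> of \<open>C\<^sup>\<infinity>\<^sub>c\<close>\<close>
  then have eq: "fclass TM \<A> TE f = fclass TM \<A> TE g" by (rule fclass_eq[OF lcs f g])
  have c: "f - g \<in> Cc TM \<A> TE"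
    using fclass_self[OF lcs f] fclass_iff[OF lcs g] eq by blast
  have F: "inv_into (fclass TM \<A> TE f) (\<lambda>k. k - f) h - g = h + (f - g)"
    if "h \<in> topspace (vSc_top TM \<A> TE)" for h
    using that inv_into_diff_fclass[OF lcs f] by (simp add: topspace_vSc_top[OF lcs])
  have X: "Hausdorff_space (vSc_top TM \<A> TE)" "subspace (topspace (vSc_top TM \<A> TE))"
    using H subspace_Cc[OF lcs] unfolding topspace_vSc_top[OF lcs]
    by (simp_all add: vSc_top_def Hausdorff_space_subtopology)
  have "bastiani_smooth (vSc_top TM \<A> TE) (vSc_top TM \<A> TE) (topspace (vSc_top TM \<A> TE))
      (\<lambda>h. inv_into (fclass TM \<A> TE f) (\<lambda>k. k - f) h - g)"
    by (rule bastiani_smooth_translation[OF X continuous_map_vSc_top_translate[OF lcs c] F])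
  then show ?thesis
    using image_diff_fclass[OF lcs f] eq by (simp add: topspace_vSc_top[OF lcs])
qed

end

theorem proposition4p7:
  fixes TM :: "'m topology"
    and \<A> :: "('m set \<times> ('m \<Rightarrow> 'r::euclidean_space)) set"
    and TE :: "'e::real_vector topology"
  assumes M: "smooth_manifold TM \<A>" "topspace TM = UNIV"
    and E: "lcs TE" "topspace TE = UNIV"
  shows
    "(\<forall>f \<in> Cinf TM \<A> TE.
        openin (fS_top TM \<A> TE) (fclass TM \<A> TE f) \<and>
        homeomorphic_map (subtopology (fS_top TM \<A> TE) (fclass TM \<A> TE f))
                         (vSc_top TM \<A> TE) (\<lambda>g. g - f)) \<and>
     (\<Union>f \<in> Cinf TM \<A> TE. fclass TM \<A> TE f) = topspace (fS_top TM \<A> TE) \<and>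
     (\<forall>f \<in> Cinf TM \<A> TE. \<forall>g \<in> Cinf TM \<A> TE.
        bastiani_smooth (vSc_top TM \<A> TE) (vSc_top TM \<A> TE)
          ((\<lambda>h. h - f) ` (fclass TM \<A> TE f \<inter> fclass TM \<A> TE g))
          (\<lambda>h. (inv_into (fclass TM \<A> TE f) (\<lambda>k. k - f) h) - g))"
proof (intro conjI ballI)
  fix f assume f: "f \<in> Cinf TM \<A> TE"
  show "openin (fS_top TM \<A> TE) (fclass TM \<A> TE f)"
    unfolding fS_top_def by (rule topology_generated_by_Basis) (use f in blast)
  show "homeomorphic_map (subtopology (fS_top TM \<A> TE) (fclass TM \<A> TE f)) (vSc_top TM \<A> TE) (\<lambda>g. g - f)"
    using homeomorphic_map_fclass[OF E(1) f] by (simp add: subtopology_fS_top_fclass[OF E(1) f])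
next
  show "(\<Union>f \<in> Cinf TM \<A> TE. fclass TM \<A> TE f) = topspace (fS_top TM \<A> TE)"
    unfolding topspace_fS_top[OF E(1)]
    using fclass_self[OF E(1), of _ TM \<A>] fclass_subset_Cinf[of TM \<A> TE] by blast
next
  fix f g assume "f \<in> Cinf TM \<A> TE" "g \<in> Cinf TM \<A> TE"
  then show "bastiani_smooth (vSc_top TM \<A> TE) (vSc_top TM \<A> TE)
      ((\<lambda>h. h - f) ` (fclass TM \<A> TE f \<inter> fclass TM \<A> TE g))
      (\<lambda>h. (inv_into (fclass TM \<A> TE f) (\<lambda>k. k - f) h) - g)"
    by (rule bastiani_smooth_fclass_transition[OF E(1) Hausdorff_space_vS_top[OF M E]])
qed

end
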